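(* Consider the splitting scheme, with constant matrices $\gamma,\sigma\in\mathbb{R}^{3N\times3N}$ satisfying $\sigma\sigma^T=\frac2\beta\gamma$, time step $\Delta t>0$, and i.i.d. standard Gaussian vectors $(\mathcal{G}^n)_{n\ge0},(\mathcal{G}^{n+1/2})_{n\ge0}$ in $\mathbb{R}^{3N}$: (1) $p^{n+1/4}=p^n-\frac{\Delta t}4\gamma M^{-1}(p^n+p^{n+1/4})+\sqrt{\frac{\Delta t}2}\sigma\mathcal{G}^n+\nabla\xi(q^n)\lambda^{n+1/4}$, with $\nabla\xi(q^n)^TM^{-1}p^{n+1/4}=0$; (2) $p^{n+1/2}=p^{n+1/4}-\frac{\Delta t}2\nabla V(q^n)+\nabla\xi(q^n)\lambda^{n+1/2}$, $q^{n+1}=q^n+\Delta t\,M^{-1}p^{n+1/2}$, $\xi(q^{n+1})=z$, $p^{n+3/4}=p^{n+1/2}-\frac{\Delta t}2\nabla V(q^{n+1})+\nabla\xi(q^{n+1})\lambda^{n+3/4}$, with $\nabla\xi(q^{n+1})^TM^{-1}p^{n+3/4}=0$; (3) $p^{n+1}=p^{n+3/4}-\frac{\Delta t}4\gamma M^{-1}(p^{n+3/4}+p^{n+1})+\sqrt{\frac{\Delta t}2}\sigma\mathcal{G}^{n+1/2}+\nabla\xi(q^{n+1})\lambda^{n+1}$, with $\nabla\xi(q^{n+1})^TM^{-1}p^{n+1}=0$; where the $\lambda$'s in $\mathbb{R}^m$ are Lagrange multipliers enforcing the indicated constraints. Suppose that $\frac{\Delta t}4\gamma=M=\frac{\Delta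 t}2\mathrm{Id}$. Then any sequence of iterates of this scheme satisfies the Euler scheme $$q^{n+1}=q^n-\Delta t\,\nabla V(q^n)+\sqrt{\frac{2\Delta t}\beta}\,\widetilde{\mathcal{G}}^n+\nabla\xi(q^n)\lambda^{n+1}_{\rm od},\qquad \xi(q^{n+1})=z,$$ where $\widetilde{\mathcal{G}}^n=\frac{\sqrt\beta}2\sigma\mathcal{G}^n$ are i.i.d. centered normalized Gaussian vectors and $\lambda^{n+1}_{\rm od}=\lambda^{n+1/4}+2\lambda^{n+1/2}\in\mathbb{R}^m$ is the Lagrange multiplier associated with the constraint $\xi(q^{n+1})=z$. Moreover, with $G(q)=\nabla\xi(q)^T\nabla\xi(q)$, $$2\lambda^{n+1/2}=G^{-1}(q^n)\Big(\nabla\xi(q^n)^T(q^{n+1}-q^n)+\Delta t\,\nabla\xi(q^n)^T\nabla V(q^n)\Big)=\lambda^{n+1}_{\rm od}+\sqrt{\frac{2\Delta t}\beta}\,G^{-1}(q^n)\nabla\xi(q^n)^T\widetilde{\mathcal{G}}^n,$$ $$2\lambda^{n+3/4}=G^{-1}(q^{n+1})\Big(\nabla\xi(q^{n+1})^T(q^n-q^{n+1})+\Delta t\,\nabla\xi(q^{n+1})^T\nabla V(q^{n+1})\Big).$$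
   Context: $q,p\in\mathbb{R}^{3N}$, $V:\mathbb{R}^{3N}\to\mathbb{R}$ smooth, $\beta>0$, $M$ a symmetric positive definite mass matrix. $\xi:\mathbb{R}^{3N}\to\mathbb{R}^m$ smooth, $\nabla\xi(q)=(\nabla\xi_1(q),\dots,\nabla\xi_m(q))\in\mathbb{R}^{3N\times m}$, with $\nabla\xi^TM^{-1}\nabla\xi$ invertible on $\{\xi=z\}$. Under the condition $\frac{\Delta t}4\gamma=M=\frac{\Delta t}2\mathrm{Id}$, $M$ and $\gamma$ are scalar multiples of the identity and $\sigma\sigma^T=\frac4\beta\mathrm{Id}$. *)

theory Defs
  imports "HOL-Analysis.Analysis"
begin

end

theory Submission
  imports Defs
begin

text \<open>For \<open>M = (\<Delta>t/2) Id\<close> and \<open>\<gamma> = 2 Id\<close> the implicit friction step has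
  \<open>(\<Delta>t/4) \<gamma> M\<^sup>-\<^sup>1 = Id\<close>, so the old momentum cancels and \<open>2 p(n+1/4)\<close> is just noise plus
  a constraint force. The drift \<open>q(n+1) = q(n) + 2 p(n+1/2)\<close> is then exactly an Euler step of the
  constrained overdamped dynamics. Each multiplier is recovered by applying \<open>\<nabla>\<xi>\<^sup>T\<close> to its
  momentum update: the momentum it produces is tangent, so only \<open>\<nabla>\<xi>\<^sup>T\<nabla>\<xi> \<lambda>\<close> survives,
  and this Gram matrix is invertible on the constraint manifold.\<close>

lemma matrix_inv_unique:
  fixes A B :: "'a::field^'n^'n"
  assumes "A ** B = mat 1"
  shows "matrix_inv A = B"
proof -
  have BA: "B ** A = mat 1" using assms matrix_left_right_inverse by blast
  have "A ** matrix_inv A = mat 1 \<and> matrix_inv A ** A = mat 1"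
    unfolding matrix_inv_def by (rule someI[of _ B]) (use assms BA in simp)
  then have "matrix_inv A = (B ** A) ** matrix_inv A \<and> B ** (A ** matrix_inv A) = B"
    using BA by simp
  then show ?thesis by (metis matrix_mul_assoc)
qed

lemma matrix_inv_left:
  fixes A :: "'a::semiring_1^'n^'m"
  assumes "invertible A"
  shows "matrix_inv A ** A = mat 1"
proof -
  have "A ** matrix_inv A = mat 1 \<and> matrix_inv A ** A = mat 1"
    using assms unfolding matrix_inv_def invertible_def by (rule someI_ex)
  then show ?thesis ..
qed

lemma matrix_inv_mult_vector_cancel:
  fixes A :: "'a::comm_semiring_1^'n^'m"
  assumes "invertible A"
  shows "matrix_inv A *v (A *v x) = x"
  by (simp add: matrix_vector_mul_assoc matrix_inv_left[OF assms])

lemma gram_matrix_inv_cancel: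
  fixes J :: "'a::field^'m^'n"
  assumes "invertible (transpose J ** J)"
  shows "matrix_inv (transpose J ** J) *v (transpose J *v (J *v l)) = l"
  using matrix_inv_mult_vector_cancel[OF assms] by (simp only: matrix_vector_mul_assoc)

lemma matrix_inv_scaleR_mat_1:
  fixes c :: real
  assumes "c \<noteq> 0"
  shows "matrix_inv (c *\<^sub>R mat 1 :: real^'n^'n) = inverse c *\<^sub>R mat 1"
  by (rule matrix_inv_unique) (simp add: assms matrix_scalar_ac flip: scalar_matrix_assoc)

lemma invertible_scaleR_iff:
  fixes A :: "real^'n^'m"
  assumes "c \<noteq> 0"
  shows "invertible (c *\<^sub>R A) \<longleftrightarrow> invertible A"
  using scalar_invertible[of c A] scalar_invertible[of "inverse c" "c *\<^sub>R A"] assms by auto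

lemma constrained_kick_drift_is_Euler_step:
  fixes q q' p14 p12 g w :: "real^'n" and J :: "real^'m^'n" and l14 l12 :: "real^'m"
  assumes gram: "invertible (transpose J ** J)"
    and kick: "2 *\<^sub>R p14 = c *\<^sub>R w + J *v l14"
    and tangent: "transpose J *v p14 = 0"
    and force: "p12 = p14 - (dt / 2) *\<^sub>R g + J *v l12"
    and drift: "q' = q + 2 *\<^sub>R p12"
  shows "q' = q - dt *\<^sub>R g + c *\<^sub>R w + J *v (l14 + 2 *\<^sub>R l12)"
    and "2 *\<^sub>R l12 = matrix_inv (transpose J ** J) *v (transpose J *v (q' - q) + dt *\<^sub>R (transpose J *v g))"
    and "2 *\<^sub>R l12 = (l14 + 2 *\<^sub>R l12) + c *\<^sub>R (matrix_inv (transpose J ** J) *v (transpose J *v w))"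
proof -
  have step: "q' - q = 2 *\<^sub>R p14 - dt *\<^sub>R g + J *v (2 *\<^sub>R l12)"
    using drift force by (simp add: algebra_simps)
  then show "q' = q - dt *\<^sub>R g + c *\<^sub>R w + J *v (l14 + 2 *\<^sub>R l12)"
    using kick by (simp add: algebra_simps)
  have "transpose J *v (q' - q) + dt *\<^sub>R (transpose J *v g) = transpose J *v (J *v (2 *\<^sub>R l12))"
    using tangent unfolding step by (simp add: algebra_simps del: transpose_matrix_vector)
  then show "2 *\<^sub>R l12 = matrix_inv (transpose J ** J) *v (transpose J *v (q' - q) + dt *\<^sub>R (transpose J *v g))"
    using gram_matrix_inv_cancel[OF gram] by (simp del: transpose_matrix_vector)
  have "transpose J *v (c *\<^sub>R w + J *v l14) = 0"
    unfolding kick[symmetric] using tangent by (simp add: matrix_vector_mult_scaleR del: transpose_matrix_vector)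
  then have "matrix_inv (transpose J ** J) *v (c *\<^sub>R (transpose J *v w) + transpose J *v (J *v l14)) = 0"
    by (simp add: algebra_simps del: transpose_matrix_vector)
  then have "c *\<^sub>R (matrix_inv (transpose J ** J) *v (transpose J *v w)) + l14 = 0"
    by (simp add: gram_matrix_inv_cancel[OF gram] matrix_vector_right_distrib matrix_vector_mult_scaleR del: transpose_matrix_vector)
  then show "2 *\<^sub>R l12 = (l14 + 2 *\<^sub>R l12) + c *\<^sub>R (matrix_inv (transpose J ** J) *v (transpose J *v w))"
    by (simp add: algebra_simps)
qed

lemma constrained_force_multiplier:
  fixes q q' p12 p34 g :: "real^'n" and J :: "real^'m^'n" and l34 :: "real^'m"
  assumes gram: "invertible (transpose J ** J)"
    and drift: "q' = q + 2 *\<^sub>R p12"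
    and force: "p34 = p12 - (dt / 2) *\<^sub>R g + J *v l34"
    and tangent: "transpose J *v p34 = 0"
  shows "2 *\<^sub>R l34 = matrix_inv (transpose J ** J) *v (transpose J *v (q - q') + dt *\<^sub>R (transpose J *v g))"
proof -
  have p12: "p12 = p34 + (dt / 2) *\<^sub>R g - J *v l34"
    using force by (simp add: algebra_simps)
  have step: "q - q' = - 2 *\<^sub>R p34 - dt *\<^sub>R g + J *v (2 *\<^sub>R l34)"
    unfolding drift p12 by (simp add: algebra_simps)
  have "transpose J *v (q - q') + dt *\<^sub>R (transpose J *v g) = transpose J *v (J *v (2 *\<^sub>R l34))"
    using tangent unfolding step by (simp add: algebra_simps del: transpose_matrix_vector)
  then show ?thesis
    using gram_matrix_inv_cancel[OF gram] by (simp del: transpose_matrix_vector)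
qed

theorem mainTheorem3:
  fixes N :: nat and \<beta> dt :: real and z :: "real ^ 'm"
    and V :: "real ^ 'n \<Rightarrow> real" and gradV :: "real ^ 'n \<Rightarrow> real ^ 'n"
    and \<xi> :: "real ^ 'n \<Rightarrow> real ^ 'm" and grad\<xi> :: "real ^ 'n \<Rightarrow> real ^ 'm ^ 'n"
    and M \<gamma> \<sigma> :: "real ^ 'n ^ 'n"
    and q p p14 p12 p34 G0 Ghalf :: "nat \<Rightarrow> real ^ 'n"
    and l14 l12 l34 l1 :: "nat \<Rightarrow> real ^ 'm"
  assumes dim: "CARD('n) = 3 * N"
    and beta_pos: "\<beta> > 0" and dt_pos: "dt > 0"
    and V_grad: "\<And>x. (V has_derivative (\<lambda>h. gradV x \<bullet> h)) (at x)"
    and xi_grad: "\<And>x. (\<xi> has_derivative (\<lambda>h. transpose (grad\<xi> x) *v h)) (at x)"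
    and Gram_inv: "\<And>x. \<xi> x = z \<Longrightarrow> invertible (transpose (grad\<xi> x) ** matrix_inv M ** grad\<xi> x)"
    and sigma_gamma: "\<sigma> ** transpose \<sigma> = (2 / \<beta>) *\<^sub>R \<gamma>"
    and gamma_M: "(dt / 4) *\<^sub>R \<gamma> = M"
    and M_id: "M = (dt / 2) *\<^sub>R mat 1"
    and init: "\<xi> (q 0) = z"
    and step1: "\<And>n. p14 n = p n - (dt / 4) *\<^sub>R ((\<gamma> ** matrix_inv M) *v (p n + p14 n))
                 + sqrt (dt / 2) *\<^sub>R (\<sigma> *v G0 n) + grad\<xi> (q n) *v l14 n"
    and cons1: "\<And>n. transpose (grad\<xi> (q n)) *v (matrix_inv M *v p14 n) = 0"
    and step2a: "\<And>n. p12 n = p14 n - (dt / 2) *\<^sub>R gradV (q n) + grad\<xi> (q n) *v l12 n"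
    and step2b: "\<And>n. q (Suc n) = q n + dt *\<^sub>R (matrix_inv M *v p12 n)"
    and cons2: "\<And>n. \<xi> (q (Suc n)) = z"
    and step2c: "\<And>n. p34 n = p12 n - (dt / 2) *\<^sub>R gradV (q (Suc n)) + grad\<xi> (q (Suc n)) *v l34 n"
    and cons3: "\<And>n. transpose (grad\<xi> (q (Suc n))) *v (matrix_inv M *v p34 n) = 0"
    and step3: "\<And>n. p (Suc n) = p34 n - (dt / 4) *\<^sub>R ((\<gamma> ** matrix_inv M) *v (p34 n + p (Suc n)))
                 + sqrt (dt / 2) *\<^sub>R (\<sigma> *v Ghalf n) + grad\<xi> (q (Suc n)) *v l1 n"
    and cons4: "\<And>n. transpose (grad\<xi> (q (Suc n))) *v (matrix_inv M *v p (Suc n)) = 0"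
  shows "(\<beta> / 4) *\<^sub>R (\<sigma> ** transpose \<sigma>) = mat 1 \<and>
    (\<forall>n. let Gt = (sqrt \<beta> / 2) *\<^sub>R (\<sigma> *v G0 n);
             lod = l14 n + 2 *\<^sub>R l12 n;
             J0 = grad\<xi> (q n); J1 = grad\<xi> (q (Suc n));
             Gr0 = transpose J0 ** J0; Gr1 = transpose J1 ** J1
         in q (Suc n) = q n - dt *\<^sub>R gradV (q n) + sqrt (2 * dt / \<beta>) *\<^sub>R Gt + J0 *v lod
          \<and> \<xi> (q (Suc n)) = z
          \<and> 2 *\<^sub>R l12 n = matrix_inv Gr0 *v (transpose J0 *v (q (Suc n) - q n)
                              + dt *\<^sub>R (transpose J0 *v gradV (q n)))
          \<and> 2 *\<^sub>R l12 n = lod + sqrt (2 * dt / \<beta>) *\<^sub>R (matrix_inv Gr0 *v (transpose J0 *v Gt))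
          \<and> 2 *\<^sub>R l34 n = matrix_inv Gr1 *v (transpose J1 *v (q n - q (Suc n))
                              + dt *\<^sub>R (transpose J1 *v gradV (q (Suc n)))))"
proof -
  have dt: "dt \<noteq> 0" using dt_pos by simp
  have gamma: "\<gamma> = 2 *\<^sub>R mat 1"
  proof -
    have "\<gamma> = (4 / dt) *\<^sub>R ((dt / 4) *\<^sub>R \<gamma>)" using dt by simp
    then show ?thesis using dt by (simp add: gamma_M M_id)
  qed
  have M_inv_apply: "matrix_inv M *v x = (2 / dt) *\<^sub>R x" for x
    using dt by (simp add: M_id matrix_inv_scaleR_mat_1 flip: scaleR_matrix_vector_assoc)
  have friction: "(dt / 4) *\<^sub>R ((\<gamma> ** matrix_inv M) *v x) = x" for x
    using dt by (simp add: gamma M_inv_apply flip: matrix_vector_mul_assoc scaleR_matrix_vector_assoc)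
  have on_manifold: "\<xi> (q n) = z" for n
    by (cases n) (simp_all add: init cons2)
  have gram: "invertible (transpose (grad\<xi> (q n)) ** grad\<xi> (q n))" for n
    using Gram_inv[OF on_manifold[of n]] dt
    by (simp add: M_id matrix_inv_scaleR_mat_1 matrix_scalar_ac invertible_scaleR_iff flip: scalar_matrix_assoc)
  have noise_scale: "sqrt (dt / 2) = sqrt (2 * dt / \<beta>) * (sqrt \<beta> / 2)"
  proof -
    have "sqrt (dt / 2) = sqrt ((2 * dt / \<beta>) * (\<beta> / 4))" using beta_pos by simp
    then show ?thesis by (simp add: real_sqrt_mult real_sqrt_divide)
  qed
  have kick: "2 *\<^sub>R p14 n = sqrt (2 * dt / \<beta>) *\<^sub>R ((sqrt \<beta> / 2) *\<^sub>R (\<sigma> *v G0 n)) + grad\<xi> (q n) *v l14 n" for n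
    using step1[of n, unfolded friction] by (simp add: noise_scale algebra_simps scaleR_2)
  have drift: "q (Suc n) = q n + 2 *\<^sub>R p12 n" for n
    using step2b[of n] dt by (simp add: M_inv_apply)
  have tangent: "transpose (grad\<xi> (q n)) *v p14 n = 0" "transpose (grad\<xi> (q (Suc n))) *v p34 n = 0" for n
    using cons1[of n] cons3[of n] dt by (simp_all add: M_inv_apply matrix_vector_mult_scaleR del: transpose_matrix_vector)
  have fluctuation_dissipation: "(\<beta> / 4) *\<^sub>R (\<sigma> ** transpose \<sigma>) = mat 1"
    using beta_pos by (simp add: sigma_gamma gamma)
  show ?thesis
    unfolding Let_def
    using fluctuation_dissipation cons2
      constrained_kick_drift_is_Euler_step[OF gram kick tangent(1) step2a drift]
      constrained_force_multiplier[OF gram drift step2c tangent(2)]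
    by blast
qed

end
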